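(* Every line graph is perfectly divisible; that is, for every graph $G$, the line graph $L(G)$ is perfectly divisible.
   Context: All graphs are finite and simple. The line graph $L(G)$ has vertex set $E(G)$, two edges being adjacent in $L(G)$ if they share an endpoint in $G$. A graph is perfect if every induced subgraph $H$ satisfies $\chi(H)=\omega(H)$. A graph $G$ is perfectly divisible if for every induced subgraph $H$ of $G$, $V(H)$ can be partitioned into $A,B$ with $H[A]$ perfect and $\omega(H[B])<\omega(H)$. *)

theory Defs
  imports Main
begin

text \<open>A graph is given by a vertex set V and an adjacency predicate adj
(only its restriction to V matters). Induced subgraphs are vertex subsets.\<close>

definition is_clique :: "('v \<Rightarrow> 'v \<Rightarrow> bool) \<Rightarrow> 'v set \<Rightarrow> bool" where
  "is_clique adj C \<longleftrightarrow> (\<forall>x\<in>C. \<forall>y\<in>C. x \<noteq> y \<longrightarrow> adj x y)"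

definition clique_number :: "('v \<Rightarrow> 'v \<Rightarrow> bool) \<Rightarrow> 'v set \<Rightarrow> nat" where
  "clique_number adj H = Max {card C | C. C \<subseteq> H \<and> is_clique adj C}"

definition proper_colouring :: "('v \<Rightarrow> 'v \<Rightarrow> bool) \<Rightarrow> 'v set \<Rightarrow> nat \<Rightarrow> ('v \<Rightarrow> nat) \<Rightarrow> bool" where
  "proper_colouring adj H k f \<longleftrightarrow>
     (\<forall>x\<in>H. f x < k) \<and> (\<forall>x\<in>H. \<forall>y\<in>H. x \<noteq> y \<and> adj x y \<longrightarrow> f x \<noteq> f y)"

definition chromatic_number :: "('v \<Rightarrow> 'v \<Rightarrow> bool) \<Rightarrow> 'v set \<Rightarrow> nat" where
  "chromatic_number adj H = (LEAST k. \<exists>f. proper_colouring adj H k f)"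

definition perfect :: "'v set \<Rightarrow> ('v \<Rightarrow> 'v \<Rightarrow> bool) \<Rightarrow> bool" where
  "perfect V adj \<longleftrightarrow> (\<forall>H\<subseteq>V. chromatic_number adj H = clique_number adj H)"

text \<open>Perfect divisibility; the condition is required for nonempty induced
subgraphs (for the empty graph omega(B) < omega(H) = 0 is impossible).\<close>
definition perfectly_divisible :: "'v set \<Rightarrow> ('v \<Rightarrow> 'v \<Rightarrow> bool) \<Rightarrow> bool" where
  "perfectly_divisible V adj \<longleftrightarrow>
     (\<forall>H\<subseteq>V. H \<noteq> {} \<longrightarrow>
        (\<exists>A B. A \<union> B = H \<and> A \<inter> B = {} \<and> perfect A adj \<and>
               clique_number adj B < clique_number adj H))"

definition simple_graph :: "'a set \<Rightarrow> 'a set set \<Rightarrow> bool" where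
  "simple_graph V E \<longleftrightarrow> finite V \<and> (\<forall>e\<in>E. \<exists>u v. u \<in> V \<and> v \<in> V \<and> u \<noteq> v \<and> e = {u, v})"

definition line_adj :: "'a set \<Rightarrow> 'a set \<Rightarrow> bool" where
  "line_adj e f \<longleftrightarrow> e \<noteq> f \<and> e \<inter> f \<noteq> {}"

end

theory Submission
  imports Defs
begin

text \<open>Cliques of a line graph L(H) are stars or triangles of H. Choose a forest A of edges of H
  that touches every vertex of H. Then L(A) is perfect: a pendant edge of a forest meets fewer
  than \<omega> other edges, all through one vertex, so greedy colouring works. Every star of H - A
  misses the A-edge at its centre, so it is smaller than \<omega>(L(H)). Triangles of H - A only
  matter when \<omega>(L(H)) = 3, i.e. when H has maximum degree at most 3; in that case the forest
  can be chosen to contain an edge of every triangle.\<close>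

section \<open>Clique number and colourings\<close>

lemma finite_clique_sizes: "finite H \<Longrightarrow> finite {card C | C. C \<subseteq> H \<and> is_clique adj C}"
  by (rule finite_subset[of _ "card ` Pow H"]) auto

lemma is_clique_empty [simp]: "is_clique adj {}"
  by (simp add: is_clique_def)

lemma is_clique_subset: "is_clique adj C \<Longrightarrow> C' \<subseteq> C \<Longrightarrow> is_clique adj C'"
  unfolding is_clique_def by blast

lemma clique_number_ge_card:
  "finite H \<Longrightarrow> C \<subseteq> H \<Longrightarrow> is_clique adj C \<Longrightarrow> card C \<le> clique_number adj H"
  unfolding clique_number_def by (rule Max_ge[OF finite_clique_sizes]) auto

lemma clique_number_attained:
  assumes "finite H"
  obtains C where "C \<subseteq> H" "is_clique adj C" "card C = clique_number adj H"
proof -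
  have "clique_number adj H \<in> {card C | C. C \<subseteq> H \<and> is_clique adj C}"
    unfolding clique_number_def
    by (rule Max_in[OF finite_clique_sizes[OF assms]]) (use is_clique_empty in blast)
  then show ?thesis using that by auto
qed

lemma clique_number_mono:
  assumes "finite H" "H' \<subseteq> H"
  shows "clique_number adj H' \<le> clique_number adj H"
proof -
  obtain C where "C \<subseteq> H'" "is_clique adj C" "card C = clique_number adj H'"
    using clique_number_attained assms finite_subset by metis
  then show ?thesis using clique_number_ge_card[of H C adj] assms by auto
qed

lemma clique_number_pos: "finite H \<Longrightarrow> H \<noteq> {} \<Longrightarrow> 0 < clique_number adj H"
  using clique_number_ge_card[of H "{e}" adj for e] by (fastforce simp: is_clique_def)

lemma clique_number_le_colours:
  assumes "finite H" "proper_colouring adj H k f"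
  shows "clique_number adj H \<le> k"
proof -
  obtain C where C: "C \<subseteq> H" "is_clique adj C" "card C = clique_number adj H"
    using clique_number_attained[OF assms(1)] by blast
  have "inj_on f C"
    using C assms(2) unfolding inj_on_def is_clique_def proper_colouring_def by blast
  then have "card C = card (f ` C)" by (simp add: card_image)
  also have "\<dots> \<le> card {..<k}"
    by (rule card_mono) (use C assms(2) in \<open>auto simp: proper_colouring_def\<close>)
  finally show ?thesis using C by simp
qed

lemma proper_colouring_mono:
  "proper_colouring adj H k f \<Longrightarrow> k \<le> k' \<Longrightarrow> proper_colouring adj H k' f"
  unfolding proper_colouring_def by auto

lemma proper_colouring_insert:
  assumes g: "proper_colouring adj F k g" and "finite F"
    and few: "card {f\<in>F. adj e f \<or> adj f e} < k"
  shows "\<exists>h. proper_colouring adj (insert e F) k h"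
proof -
  define N where "N = {f\<in>F. adj e f \<or> adj f e}"
  have "finite N" using \<open>finite F\<close> by (simp add: N_def)
  then have "card (g ` N) < k" using card_image_le[of N g] few by (simp add: N_def)
  then have "\<not> {..<k} \<subseteq> g ` N" using card_mono[OF finite_imageI[OF \<open>finite N\<close>]] by fastforce
  then obtain c where c: "c < k" "c \<notin> g ` N" by auto
  have "proper_colouring adj (insert e F) k (g(e := c))"
    using g c unfolding proper_colouring_def N_def by auto
  then show ?thesis by blast
qed

lemma perfectI:
  assumes "finite A" "\<And>H. H \<subseteq> A \<Longrightarrow> \<exists>f. proper_colouring adj H (clique_number adj H) f"
  shows "perfect A adj"
  unfolding perfect_def
proof (intro allI impI)
  fix H assume "H \<subseteq> A"
  then obtain f where f: "proper_colouring adj H (clique_number adj H) f"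
    using assms(2) by blast
  have "chromatic_number adj H \<le> clique_number adj H"
    unfolding chromatic_number_def by (rule Least_le) (use f in blast)
  moreover have "\<exists>g. proper_colouring adj H (chromatic_number adj H) g"
    unfolding chromatic_number_def by (rule LeastI_ex) (use f in blast)
  then have "clique_number adj H \<le> chromatic_number adj H"
    using clique_number_le_colours \<open>H \<subseteq> A\<close> assms(1) finite_subset by blast
  ultimately show "chromatic_number adj H = clique_number adj H" by simp
qed

section \<open>Forests of edges and their line graphs\<close>

definition doubletons :: "'a set set \<Rightarrow> bool" where
  "doubletons H \<longleftrightarrow> (\<forall>e\<in>H. \<exists>u v. u \<noteq> v \<and> e = {u, v})"

lemma doubletons_subset: "doubletons H \<Longrightarrow> H' \<subseteq> H \<Longrightarrow> doubletons H'"
  unfolding doubletons_def by blast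

lemma doubleton_through: "doubletons H \<Longrightarrow> e \<in> H \<Longrightarrow> u \<in> e \<Longrightarrow> \<exists>v. v \<noteq> u \<and> e = {u, v}"
  unfolding doubletons_def by fastforce

lemma star_clique: "is_clique line_adj {e\<in>H. v \<in> e}"
  unfolding is_clique_def line_adj_def by blast

text \<open>For a family of 2-sets this says that the edges form a forest.\<close>
definition pendant_degenerate :: "'a set set \<Rightarrow> bool" where
  "pendant_degenerate F \<longleftrightarrow>
     (\<forall>F'\<subseteq>F. F' \<noteq> {} \<longrightarrow> (\<exists>e\<in>F'. \<exists>u\<in>e. \<forall>f\<in>F'. u \<in> f \<longrightarrow> f = e))"

lemma pendant_degenerate_subset:
  "pendant_degenerate F \<Longrightarrow> F' \<subseteq> F \<Longrightarrow> pendant_degenerate F'"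
  unfolding pendant_degenerate_def by (meson subset_trans)

lemma pendant_degenerate_empty: "pendant_degenerate {}"
  unfolding pendant_degenerate_def by simp

lemma pendant_degenerate_insert:
  assumes "pendant_degenerate F" "u \<in> e" "\<forall>f\<in>F. u \<notin> f"
  shows "pendant_degenerate (insert e F)"
  unfolding pendant_degenerate_def
proof (intro allI impI)
  fix F' assume F': "F' \<subseteq> insert e F" "F' \<noteq> {}"
  show "\<exists>e\<in>F'. \<exists>u\<in>e. \<forall>f\<in>F'. u \<in> f \<longrightarrow> f = e"
  proof (cases "e \<in> F'")
    case True
    then show ?thesis using F'(1) assms(2,3) by blast
  next
    case False
    then have "F' \<subseteq> F" using F'(1) by auto
    then show ?thesis using assms(1) F'(2) unfolding pendant_degenerate_def by blast
  qed
qed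

lemma pendant_degenerate_colouring:
  assumes "finite F" "pendant_degenerate F" "doubletons F"
  shows "\<exists>f. proper_colouring line_adj F (clique_number line_adj F) f"
  using assms
proof (induction F rule: finite_psubset_induct)
  case (psubset F)
  show ?case
  proof (cases "F = {}")
    case True
    then show ?thesis unfolding proper_colouring_def by simp
  next
    case False
    then obtain e u where e: "e \<in> F" "u \<in> e" and pendant: "\<forall>f\<in>F. u \<in> f \<longrightarrow> f = e"
      using psubset.prems(1) unfolding pendant_degenerate_def by blast
    obtain v where v: "e = {u, v}"
      using doubleton_through[OF psubset.prems(2) e] by blast
    let ?F0 = "F - {e}" and ?\<omega> = "clique_number line_adj F"
    have "?F0 \<subset> F" using e(1) by blast
    moreover have "pendant_degenerate ?F0" "doubletons ?F0"
      using pendant_degenerate_subset[OF psubset.prems(1) Diff_subset]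
        doubletons_subset[OF psubset.prems(2) Diff_subset] by blast+
    ultimately obtain g where "proper_colouring line_adj ?F0 (clique_number line_adj ?F0) g"
      using psubset.IH by blast
    then have g: "proper_colouring line_adj ?F0 ?\<omega> g"
      using proper_colouring_mono clique_number_mono[OF psubset.hyps(1)] by blast
    define N where "N = {f\<in>?F0. line_adj e f \<or> line_adj f e}"
    have star: "insert e N \<subseteq> {f\<in>F. v \<in> f}"
      using e pendant v unfolding N_def line_adj_def by blast
    then have "is_clique line_adj (insert e N)" by (rule is_clique_subset[OF star_clique])
    moreover have "insert e N \<subseteq> F" using star by blast
    ultimately have "card (insert e N) \<le> ?\<omega>"
      using clique_number_ge_card[OF psubset.hyps(1)] by blast
    moreover have "e \<notin> N" "finite N" using psubset.hyps(1) by (auto simp: N_def)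
    ultimately have "card N < ?\<omega>" by simp
    moreover have "finite ?F0" using psubset.hyps(1) by blast
    ultimately obtain h where "proper_colouring line_adj (insert e ?F0) ?\<omega> h"
      using proper_colouring_insert[OF g] unfolding N_def by blast
    then show ?thesis using e(1) by (metis insert_Diff)
  qed
qed

lemma pendant_degenerate_perfect:
  assumes "finite A" "pendant_degenerate A" "doubletons A"
  shows "perfect A line_adj"
  by (rule perfectI[OF assms(1)])
    (meson assms pendant_degenerate_colouring pendant_degenerate_subset doubletons_subset
      finite_subset)

lemma pendant_degenerate_extend_to_cover:
  assumes "finite H" "pendant_degenerate F" "F \<subseteq> H"
  obtains A where "F \<subseteq> A" "A \<subseteq> H" "pendant_degenerate A" "\<forall>e\<in>H. \<forall>v\<in>e. \<exists>a\<in>A. v \<in> a"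
proof -
  define S where "S = {A. F \<subseteq> A \<and> A \<subseteq> H \<and> pendant_degenerate A}"
  have "S \<subseteq> Pow H" unfolding S_def by blast
  then have "finite S" using assms(1) by (meson finite_Pow_iff finite_subset)
  moreover have "F \<in> S" using assms(2,3) by (simp add: S_def)
  ultimately obtain A where A: "A \<in> S" and maximal: "\<forall>A'\<in>S. A \<subseteq> A' \<longrightarrow> A = A'"
    using finite_has_maximal2 by metis
  have "\<exists>a\<in>A. v \<in> a" if "e \<in> H" "v \<in> e" for e v
  proof (rule ccontr)
    assume "\<not> (\<exists>a\<in>A. v \<in> a)"
    then have "insert e A \<in> S"
      using A pendant_degenerate_insert[of A v e] that unfolding S_def by auto
    then have "A = insert e A" by (rule maximal[rule_format, OF _ subset_insertI])
    then show False using \<open>\<not> (\<exists>a\<in>A. v \<in> a)\<close> that(2) by blast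
  qed
  then have "\<forall>e\<in>H. \<forall>v\<in>e. \<exists>a\<in>A. v \<in> a" by blast
  moreover have "F \<subseteq> A" "A \<subseteq> H" "pendant_degenerate A" using A unfolding S_def by auto
  ultimately show ?thesis using that by blast
qed

section \<open>Triangles in graphs of maximum degree three\<close>

definition degree :: "'a set set \<Rightarrow> 'a \<Rightarrow> nat" where
  "degree H v = card {e\<in>H. v \<in> e}"

definition triangle :: "'a set set \<Rightarrow> 'a \<Rightarrow> 'a \<Rightarrow> 'a \<Rightarrow> bool" where
  "triangle H a b c \<longleftrightarrow>
     a \<noteq> b \<and> b \<noteq> c \<and> a \<noteq> c \<and> {a,b} \<in> H \<and> {b,c} \<in> H \<and> {a,c} \<in> H"

definition triangle_edge :: "'a set set \<Rightarrow> 'a set \<Rightarrow> bool" where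
  "triangle_edge H e \<longleftrightarrow> (\<exists>x y z. triangle H x y z \<and> e = {x,y})"

definition has_triangle_claw :: "'a set set \<Rightarrow> 'a set set \<Rightarrow> bool" where
  "has_triangle_claw H F \<longleftrightarrow>
     (\<exists>a b c d. triangle H a b c \<and> d \<notin> {a,b,c} \<and> {d,a} \<in> F \<and> {d,b} \<in> F \<and> {d,c} \<in> F)"

definition hits_triangles :: "'a set set \<Rightarrow> 'a set set \<Rightarrow> bool" where
  "hits_triangles H F \<longleftrightarrow> (\<forall>a b c. triangle H a b c \<longrightarrow> {a,b} \<in> F \<or> {b,c} \<in> F \<or> {a,c} \<in> F)"

lemma hits_triangles_mono: "hits_triangles H F \<Longrightarrow> F \<subseteq> A \<Longrightarrow> hits_triangles H A"
  unfolding hits_triangles_def by blast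

lemma triangle_swap12: "triangle H a b c \<Longrightarrow> triangle H b a c"
  unfolding triangle_def by (auto simp: insert_commute)

lemma triangle_swap23: "triangle H a b c \<Longrightarrow> triangle H a c b"
  unfolding triangle_def by (auto simp: insert_commute)

lemma fourth_neighbour_repeats:
  assumes "finite H" "degree H v \<le> 3" "{v,p} \<in> H" "{v,q} \<in> H" "{v,r} \<in> H" "{v,s} \<in> H"
    "distinct [v,p,q,r]" "v \<noteq> s"
  shows "s \<in> {p,q,r}"
proof (rule ccontr)
  assume "s \<notin> {p,q,r}"
  then have "card {{v,p},{v,q},{v,r},{v,s}} = 4"
    using assms(7,8) by (auto simp: doubleton_eq_iff)
  moreover have "{{v,p},{v,q},{v,r},{v,s}} \<subseteq> {e\<in>H. v \<in> e}" using assms(3-6) by auto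
  then have "card {{v,p},{v,q},{v,r},{v,s}} \<le> degree H v"
    unfolding degree_def using assms(1) by (simp add: card_mono)
  ultimately show False using assms(2) by simp
qed

text \<open>The edge of F at a corner a of a triangle that F misses leads to a fourth vertex a', and
  the triangle through that edge, cut down by the degree bound at a, joins a' to b or c.\<close>
lemma triangle_edge_at_corner:
  assumes "finite H" "\<forall>w. degree H w \<le> 3" "doubletons H" "F \<subseteq> H" "\<forall>e\<in>F. triangle_edge H e"
    and abc: "triangle H a b c" "{a,b} \<notin> F" "{a,c} \<notin> F"
    and f: "f \<in> F" "a \<in> f"
  obtains a' where "f = {a,a'}" "a' \<notin> {a,b,c}" "{a',b} \<in> H \<or> {a',c} \<in> H"
proof -
  obtain a' where a': "f = {a,a'}" "a' \<noteq> a"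
    using doubleton_through[OF assms(3)] assms(4) f by blast
  have "a' \<noteq> b" "a' \<noteq> c" using a' abc(2,3) f(1) by auto
  obtain x y z where xyz: "triangle H x y z" "f = {x,y}"
    using assms(5) f(1) unfolding triangle_edge_def by blast
  have "{a,z} \<in> H \<and> {a',z} \<in> H \<and> z \<noteq> a \<and> z \<noteq> a'"
  proof (cases "x = a")
    case True
    then have "y = a'" using xyz(2) a' by (auto simp: doubleton_eq_iff)
    then show ?thesis using True xyz(1) unfolding triangle_def by (auto simp: insert_commute)
  next
    case False
    then have "x = a'" "y = a" using xyz(2) a' by (auto simp: doubleton_eq_iff)
    then show ?thesis using xyz(1) unfolding triangle_def by (auto simp: insert_commute)
  qed
  then have z: "{a,z} \<in> H" "{a',z} \<in> H" "z \<noteq> a" "z \<noteq> a'" by auto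
  have "distinct [a,b,c,a']" "{a,b} \<in> H" "{a,c} \<in> H" "{a,a'} \<in> H"
    using abc(1) a' \<open>a' \<noteq> b\<close> \<open>a' \<noteq> c\<close> assms(4) f(1) unfolding triangle_def by auto
  then have "z \<in> {b,c,a'}"
    using fourth_neighbour_repeats[OF assms(1), of a b c a' z] assms(2) z by auto
  then have "{a',b} \<in> H \<or> {a',c} \<in> H" using z by (auto simp: insert_commute)
  then show ?thesis using that a' \<open>a' \<noteq> b\<close> \<open>a' \<noteq> c\<close> by blast
qed

lemma triangle_outer_neighbour_unique:
  assumes "finite H" "\<forall>w. degree H w \<le> 3" "triangle H a b c" "x \<in> {a,b,c}"
    "{x,y} \<in> H" "{x,y'} \<in> H" "y \<notin> {a,b,c}" "y' \<notin> {a,b,c}"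
  shows "y = y'"
proof -
  have "\<exists>p q. triangle H x p q \<and> {x,p,q} = {a,b,c}"
    using assms(4)
  proof (elim insertE emptyE)
    assume "x = a"
    then show ?thesis using assms(3) by blast
  next
    assume "x = b"
    then show ?thesis using triangle_swap12[OF assms(3)] by (intro exI[of _ a] exI[of _ c]) auto
  next
    assume "x = c"
    then show ?thesis using triangle_swap12[OF triangle_swap23[OF assms(3)]]
      by (intro exI[of _ a] exI[of _ b]) auto
  qed
  then obtain p q where pq: "triangle H x p q" "{x,p,q} = {a,b,c}" by blast
  then have "{x,p} \<in> H" "{x,q} \<in> H" "distinct [x,p,q,y']" "x \<noteq> y"
    using assms(7,8) unfolding triangle_def by auto
  then have "y \<in> {p,q,y'}" using fourth_neighbour_repeats[OF assms(1)] assms(2,5,6) by metis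
  then show ?thesis using pq(2) assms(7) by auto
qed

text \<open>If every corner lay on an F-edge, these edges would lead to outer vertices, which the
  degree bound forces to coincide: a claw.\<close>
lemma missed_triangle_has_free_corner:
  assumes H: "finite H" "\<forall>w. degree H w \<le> 3" "doubletons H"
    and F: "F \<subseteq> H" "\<forall>e\<in>F. triangle_edge H e" "\<not> has_triangle_claw H F"
    and abc: "triangle H a b c" "{a,b} \<notin> F" "{b,c} \<notin> F" "{a,c} \<notin> F"
  shows "\<exists>x\<in>{a,b,c}. \<forall>f\<in>F. x \<notin> f"
proof (rule ccontr)
  assume "\<not> ?thesis"
  then obtain fa fb fc where f: "fa \<in> F" "a \<in> fa" "fb \<in> F" "b \<in> fb" "fc \<in> F" "c \<in> fc"
    by blast
  have abc': "{b,a} \<notin> F" "{c,a} \<notin> F" "{c,b} \<notin> F" using abc by (auto simp: insert_commute)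
  obtain a' where a': "fa = {a,a'}" "a' \<notin> {a,b,c}" "{a',b} \<in> H \<or> {a',c} \<in> H"
    using triangle_edge_at_corner[OF H F(1,2) abc(1,2,4) f(1,2)] by blast
  obtain b' where b': "fb = {b,b'}" "b' \<notin> {a,b,c}" "{b',a} \<in> H \<or> {b',c} \<in> H"
    using triangle_edge_at_corner[OF H F(1,2) triangle_swap12[OF abc(1)] abc'(1) abc(3) f(3,4)]
    by (metis insert_commute)
  obtain c' where c': "fc = {c,c'}" "c' \<notin> {a,b,c}" "{c',a} \<in> H \<or> {c',b} \<in> H"
    using triangle_edge_at_corner[OF H F(1,2) triangle_swap12[OF triangle_swap23[OF abc(1)]]
        abc'(2,3) f(5,6)]
    by (metis insert_commute)
  have outer: "{a,a'} \<in> H" "{b,b'} \<in> H" "{c,c'} \<in> H" using a' b' c' f F(1) by auto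
  note unique = triangle_outer_neighbour_unique[OF H(1,2) abc(1)]
  have "a' = b'" if "{b,a'} \<in> H" using unique[of b a' b'] that outer(2) a'(2) b'(2) by simp
  moreover have "a' = c'" if "{c,a'} \<in> H" using unique[of c a' c'] that outer(3) a'(2) c'(2) by simp
  moreover have "b' = a'" if "{a,b'} \<in> H" using unique[of a b' a'] that outer(1) a'(2) b'(2) by simp
  moreover have "b' = c'" if "{c,b'} \<in> H" using unique[of c b' c'] that outer(3) b'(2) c'(2) by simp
  moreover have "c' = a'" if "{a,c'} \<in> H" using unique[of a c' a'] that outer(1) a'(2) c'(2) by simp
  moreover have "c' = b'" if "{b,c'} \<in> H" using unique[of b c' b'] that outer(2) b'(2) c'(2) by simp
  moreover have "{b,a'} \<in> H \<or> {c,a'} \<in> H" "{a,b'} \<in> H \<or> {c,b'} \<in> H"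
    "{a,c'} \<in> H \<or> {b,c'} \<in> H"
    using a'(3) b'(3) c'(3) by (simp_all add: insert_commute)
  ultimately have "b' = a'" "c' = a'" by metis+
  then have "{a',a} \<in> F" "{a',b} \<in> F" "{a',c} \<in> F"
    using f a' b' c' by (auto simp: insert_commute)
  then show False using F(3) abc(1) a'(2) unfolding has_triangle_claw_def by blast
qed

lemma claw_centre_triangle_contradiction:
  assumes "finite H" "degree H d \<le> 3" "F \<subseteq> H" "triangle H p q r" "d \<notin> {p,q,r}"
    "triangle H d p z" "{d,z} \<notin> F" "{d,q} \<in> F" "{d,r} \<in> F"
  shows False
proof -
  have "{d,p} \<in> H" "{d,q} \<in> H" "{d,r} \<in> H" "{d,z} \<in> H" "distinct [d,p,q,r]" "d \<noteq> z"
    using assms(3-6,8,9) unfolding triangle_def by auto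
  then have "z \<in> {p,q,r}" using fourth_neighbour_repeats[OF assms(1,2)] by blast
  then show False using assms(6-9) unfolding triangle_def by auto
qed

text \<open>An edge x y whose triangle x y z has its other two edges outside F can be added without
  creating a claw: a claw centre d on the new edge would have the fourth neighbour z.\<close>
lemma no_triangle_claw_insert:
  assumes "finite H" "\<forall>w. degree H w \<le> 3" "F \<subseteq> H" "\<not> has_triangle_claw H F"
    and xyz: "triangle H x y z" "{x,z} \<notin> F" "{y,z} \<notin> F"
  shows "\<not> has_triangle_claw H (insert {x,y} F)"
proof
  have no_claw_at_new_edge: False
    if pqr: "triangle H p q r" "d \<notin> {p,q,r}" "{d,p} = {x,y}"
      "{d,q} \<in> insert {x,y} F" "{d,r} \<in> insert {x,y} F" for p q r d
  proof -
    have "{d,q} \<noteq> {d,p}" "{d,r} \<noteq> {d,p}"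
      using pqr(1,2) unfolding triangle_def by (auto simp: doubleton_eq_iff)
    then have dqr: "{d,q} \<in> F" "{d,r} \<in> F" using pqr(3-5) by auto
    have "\<exists>z'. triangle H d p z' \<and> {d,z'} \<notin> F"
    proof (cases "d = x")
      case True
      then have "p = y" using pqr(3) by (auto simp: doubleton_eq_iff)
      then show ?thesis using True xyz(1,2) by blast
    next
      case False
      then have "d = y" "p = x" using pqr(3) by (auto simp: doubleton_eq_iff)
      then show ?thesis using triangle_swap12[OF xyz(1)] xyz(3) by blast
    qed
    then obtain z' where "triangle H d p z'" "{d,z'} \<notin> F" by blast
    then show False
      using claw_centre_triangle_contradiction[OF assms(1) spec[OF assms(2)] assms(3) pqr(1,2)] dqr
      by blast
  qed
  assume "has_triangle_claw H (insert {x,y} F)"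
  then obtain p q r d where claw: "triangle H p q r" "d \<notin> {p,q,r}"
      "{d,p} \<in> insert {x,y} F" "{d,q} \<in> insert {x,y} F" "{d,r} \<in> insert {x,y} F"
    unfolding has_triangle_claw_def by (elim exE conjE) fast
  have "d \<notin> {q,p,r}" "d \<notin> {r,p,q}" using claw(2) by auto
  then have "{d,p} \<noteq> {x,y}" "{d,q} \<noteq> {x,y}" "{d,r} \<noteq> {x,y}"
    using no_claw_at_new_edge[OF claw(1,2) _ claw(4,5)]
      no_claw_at_new_edge[OF triangle_swap12[OF claw(1)] _ _ claw(3,5)]
      no_claw_at_new_edge[OF triangle_swap12[OF triangle_swap23[OF claw(1)]] _ _ claw(3,4)]
    by blast+
  then have "{d,p} \<in> F" "{d,q} \<in> F" "{d,r} \<in> F" using claw(3-5) by simp_all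
  then show False using claw(1,2) assms(4) unfolding has_triangle_claw_def by blast
qed

text \<open>Take F maximal among claw-free forests of triangle edges. A triangle missed by F has a
  corner outside every edge of F, and the triangle edge at that corner could be added to F.\<close>
lemma triangle_hitting_forest:
  assumes "finite H" "doubletons H" "\<forall>w. degree H w \<le> 3"
  obtains F where "F \<subseteq> H" "pendant_degenerate F" "hits_triangles H F"
proof -
  define S where "S = {F. F \<subseteq> H \<and> pendant_degenerate F \<and> (\<forall>e\<in>F. triangle_edge H e) \<and>
      \<not> has_triangle_claw H F}"
  have "S \<subseteq> Pow H" unfolding S_def by blast
  then have "finite S" using assms(1) by (meson finite_Pow_iff finite_subset)
  moreover have "{} \<in> S" unfolding S_def has_triangle_claw_def using pendant_degenerate_empty by simp
  ultimately obtain F where "F \<in> S" and maximal: "\<forall>F'\<in>S. F \<subseteq> F' \<longrightarrow> F = F'"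
    using finite_has_maximal2 by metis
  then have F: "F \<subseteq> H" "pendant_degenerate F" "\<forall>e\<in>F. triangle_edge H e"
      "\<not> has_triangle_claw H F"
    unfolding S_def by auto
  have not_free: False
    if "triangle H x y z" "{x,y} \<notin> F" "{x,z} \<notin> F" "{y,z} \<notin> F" "u \<in> {x,y}" "\<forall>f\<in>F. u \<notin> f"
    for x y z u
  proof -
    have "triangle_edge H {x,y}" using that(1) unfolding triangle_edge_def by blast
    moreover have "{x,y} \<in> H" using that(1) unfolding triangle_def by blast
    ultimately have "insert {x,y} F \<in> S"
      using F pendant_degenerate_insert[OF F(2) that(5,6)]
        no_triangle_claw_insert[OF assms(1,3) F(1,4) that(1,3,4)]
      unfolding S_def by blast
    then have "F = insert {x,y} F" by (rule maximal[rule_format, OF _ subset_insertI])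
    then show False using that(2) by blast
  qed
  have "hits_triangles H F"
    unfolding hits_triangles_def
  proof (intro allI impI, rule ccontr)
    fix a b c assume abc: "triangle H a b c" "\<not> ({a,b} \<in> F \<or> {b,c} \<in> F \<or> {a,c} \<in> F)"
    then obtain u where "u \<in> {a,b,c}" "\<forall>f\<in>F. u \<notin> f"
      using missed_triangle_has_free_corner[OF assms(1,3,2) F(1,3,4) abc(1)] by blast
    moreover have "triangle H a c b" using triangle_swap23[OF abc(1)] .
    ultimately show False
      using not_free[of a b c u] not_free[of a c b u] abc by (auto simp: insert_commute)
  qed
  then show ?thesis by (rule that[OF F(1,2)])
qed

section \<open>Cliques of line graphs\<close>

lemma line_graph_clique_star_or_triangle:
  assumes "doubletons C" "is_clique line_adj C"
  shows "(\<exists>v. \<forall>e\<in>C. v \<in> e) \<or> (\<exists>a b c. distinct [a,b,c] \<and> C = {{a,b},{b,c},{a,c}})"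
proof (cases "C = {}")
  case True
  then show ?thesis by simp
next
  case False
  then obtain e1 where e1: "e1 \<in> C" by blast
  obtain a b where ab: "a \<noteq> b" "e1 = {a,b}" using assms(1) e1 unfolding doubletons_def by blast
  have meet: "\<And>x y. x \<in> C \<Longrightarrow> y \<in> C \<Longrightarrow> x \<noteq> y \<Longrightarrow> x \<inter> y \<noteq> {}"
    using assms(2) unfolding is_clique_def line_adj_def by blast
  show ?thesis
  proof (cases "\<forall>e\<in>C. a \<in> e")
    case True
    then show ?thesis by blast
  next
    case False
    then obtain e2 where e2: "e2 \<in> C" "a \<notin> e2" by blast
    then have "b \<in> e2" using meet[OF e2(1) e1] ab by auto
    then obtain c where c: "e2 = {b,c}" "c \<noteq> b"
      using doubleton_through[OF assms(1) e2(1)] by blast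
    have "c \<noteq> a" using e2(2) c by auto
    show ?thesis
    proof (cases "\<forall>e\<in>C. b \<in> e")
      case True
      then show ?thesis by blast
    next
      case False
      then obtain e3 where e3: "e3 \<in> C" "b \<notin> e3" by blast
      then have "a \<in> e3" "c \<in> e3" using meet[OF e3(1) e1] meet[OF e3(1) e2(1)] ab c by auto
      then have e3_eq: "e3 = {a,c}"
        using doubleton_through[OF assms(1) e3(1), of a] \<open>c \<noteq> a\<close> by auto
      have "e \<in> {{a,b},{b,c},{a,c}}" if eC: "e \<in> C" for e
      proof (rule ccontr)
        assume ne: "e \<notin> {{a,b},{b,c},{a,c}}"
        obtain r s where "r \<noteq> s" "e = {r,s}" using assms(1) eC unfolding doubletons_def by blast
        moreover have "e \<inter> {a,b} \<noteq> {}" "e \<inter> {b,c} \<noteq> {}" "e \<inter> {a,c} \<noteq> {}"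
          using meet[OF eC e1] meet[OF eC e2(1)] meet[OF eC e3(1)] ne ab c e3_eq by auto
        ultimately show False using ne ab c \<open>c \<noteq> a\<close> by auto
      qed
      then have "C = {{a,b},{b,c},{a,c}}" using e1 e2(1) e3(1) ab c e3_eq by auto
      then show ?thesis using ab c \<open>c \<noteq> a\<close> by auto
    qed
  qed
qed

lemma degree_le_clique_number: "finite H \<Longrightarrow> degree H v \<le> clique_number line_adj H"
  unfolding degree_def by (rule clique_number_ge_card) (auto simp: star_clique)

lemma star_off_cover_lt_clique_number:
  assumes "finite H" "A \<subseteq> H" "a \<in> A" "v \<in> a" "C \<subseteq> H - A" "\<forall>e\<in>C. v \<in> e"
  shows "card C < clique_number line_adj H"
proof -
  have "C \<subset> {e\<in>H. v \<in> e}" using assms(2-6) by blast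
  then have "card C < degree H v" unfolding degree_def using assms(1) by (simp add: psubset_card_mono)
  then show ?thesis using degree_le_clique_number[OF assms(1), of v] by simp
qed

lemma clique_number_drops_off_covering_forest:
  assumes "finite H" "doubletons H" "H \<noteq> {}" "A \<subseteq> H"
    and covers: "\<forall>e\<in>H. \<forall>v\<in>e. \<exists>a\<in>A. v \<in> a"
    and hits: "(\<forall>w. degree H w \<le> 3) \<Longrightarrow> hits_triangles H A"
  shows "clique_number line_adj (H - A) < clique_number line_adj H"
proof -
  have "finite (H - A)" using assms(1) by simp
  then obtain C where C: "C \<subseteq> H - A" "is_clique line_adj C" "card C = clique_number line_adj (H - A)"
    by (rule clique_number_attained)
  have "doubletons C" using assms(2) C(1) doubletons_subset by blast
  then consider (star) v where "\<forall>e\<in>C. v \<in> e" | (triangle) a b c where "distinct [a,b,c]"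
      "C = {{a,b},{b,c},{a,c}}"
    using line_graph_clique_star_or_triangle[OF _ C(2)] by blast
  then have "card C < clique_number line_adj H"
  proof cases
    case star
    show ?thesis
    proof (cases "C = {}")
      case True
      then show ?thesis using clique_number_pos[OF assms(1,3)] by simp
    next
      case False
      then obtain e where "e \<in> C" by blast
      then obtain a where "a \<in> A" "v \<in> a" using star C(1) covers by blast
      then show ?thesis using star_off_cover_lt_clique_number[OF assms(1,4)] star C(1) by blast
    qed
  next
    case triangle
    then have "card C = 3" by (auto simp: doubleton_eq_iff)
    show ?thesis
    proof (cases "\<forall>w. degree H w \<le> 3")
      case True
      have "triangle H a b c" using triangle C(1) unfolding triangle_def by auto
      then show ?thesis using hits[OF True] triangle C(1) unfolding hits_triangles_def by auto
    next
      case False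
      then obtain w where "3 < degree H w" by (auto simp: not_le)
      then show ?thesis using \<open>card C = 3\<close> degree_le_clique_number[OF assms(1), of w] by simp
    qed
  qed
  then show ?thesis using C(3) by simp
qed

lemma simple_graph_edges: "simple_graph V E \<Longrightarrow> finite E \<and> doubletons E"
  unfolding simple_graph_def doubletons_def
  by (metis (no_types, lifting) Pow_iff empty_subsetI finite_Pow_iff insert_subset rev_finite_subset subsetI)

theorem mainTheorem19:
  fixes V :: "'a set" and E :: "'a set set"
  assumes "simple_graph V E"
  shows "perfectly_divisible E line_adj"
  unfolding perfectly_divisible_def
proof (intro allI impI)
  fix H assume "H \<subseteq> E" "H \<noteq> {}"
  then have H: "finite H" "doubletons H"
    using simple_graph_edges[OF assms] finite_subset doubletons_subset by blast+
  obtain F where F: "F \<subseteq> H" "pendant_degenerate F" "(\<forall>w. degree H w \<le> 3) \<Longrightarrow> hits_triangles H F"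
  proof (cases "\<forall>w. degree H w \<le> 3")
    case True
    then show ?thesis using triangle_hitting_forest[OF H True] that by blast
  next
    case False
    then show ?thesis using that[of "{}"] pendant_degenerate_empty by blast
  qed
  obtain A where A: "F \<subseteq> A" "A \<subseteq> H" "pendant_degenerate A" "\<forall>e\<in>H. \<forall>v\<in>e. \<exists>a\<in>A. v \<in> a"
    using pendant_degenerate_extend_to_cover[OF H(1) F(2,1)] by blast
  have "perfect A line_adj"
    by (rule pendant_degenerate_perfect[OF finite_subset[OF A(2) H(1)] A(3) doubletons_subset[OF H(2) A(2)]])
  moreover have "clique_number line_adj (H - A) < clique_number line_adj H"
    by (rule clique_number_drops_off_covering_forest[OF H \<open>H \<noteq> {}\<close> A(2,4)])
      (use F(3) A(1) hits_triangles_mono in blast)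
  ultimately show "\<exists>A B. A \<union> B = H \<and> A \<inter> B = {} \<and> perfect A line_adj \<and>
      clique_number line_adj B < clique_number line_adj H"
    using A(2) by (intro exI[of _ A] exI[of _ "H - A"]) auto
qed

end
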